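(* Fix $e\in\mathbb Z_{>0}$ and let $\mathsf Y_e(t)=\sum_{k\geqslant 0}y^{k+1}_{k+2+e}t^k\in\mathbb Z[[t]]$. Then \[ \mathsf Y_e(t)=\frac{\mathsf y_e(t)}{(1-t)^{2e+1}},\qquad \mathsf y_e(t)=\sum_{h=0}^{2e-1}\gamma^{(e)}_h t^h\in\mathbb Z[t], \] where for $0\leqslant h\leqslant 2e-1$ \[ \gamma^{(e)}_h=\sum_{j=0}^{h}(-1)^{h+j}\binom{2e+1}{h-j}y^{j+1}_{j+e+2}. \] In particular $\mathsf Y_e(t)$ is a rational function and $\mathsf y_e$ has degree at most $2e-1$.
   Context: Let $\mathbb N=\mathbb Z_{\geqslant 0}$ with the componentwise partial order on $\mathbb N^n$. For integers $n,d\geqslant 0$, an $(n-1)$-dimensional partition of size $d$ is a subset $\lambda\subset\mathbb N^n$ with $|\lambda|=d$ such that $\mathbf a\in\lambda$ and $\mathbf y\leqslant\mathbf a$ imply $\mathbf y\in\lambda$; $\mathrm P^n_d$ is the set of these. The embedding dimension $h_\lambda(1)$ is the number of elements of $\lambda$ whose coordinates sum to $1$. Define $y^k_d=|\{\lambda\in\mathrm P^k_d: h_\lambda(1)=k\}|$. *)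

theory Defs
  imports "HOL-Computational_Algebra.Computational_Algebra"
begin

definition partitions :: "nat \<Rightarrow> nat \<Rightarrow> nat list set set" where
  "partitions n d = {L. L \<subseteq> {a. length a = n} \<and> card L = d \<and> finite L \<and>
      (\<forall>a\<in>L. \<forall>y. length y = n \<and> list_all2 (\<le>) y a \<longrightarrow> y \<in> L)}"

definition emb_dim :: "nat list set \<Rightarrow> nat" where
  "emb_dim L = card {a\<in>L. sum_list a = 1}"

definition ycount :: "nat \<Rightarrow> nat \<Rightarrow> nat" where
  "ycount k d = card {L\<in>partitions k d. emb_dim L = k}"

definition Yser :: "nat \<Rightarrow> int fps" where
  "Yser e = Abs_fps (\<lambda>k. int (ycount (k+1) (k+2+e)))"

definition gamma :: "nat \<Rightarrow> nat \<Rightarrow> int" where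
  "gamma e h = (\<Sum>j=0..h. (-1)^(h+j) * int ((2*e+1) choose (h-j)) * int (ycount (j+1) (j+e+2)))"

definition ypoly :: "nat \<Rightarrow> int poly" where
  "ypoly e = (\<Sum>h=0..2*e-1. monom (gamma e h) h)"

end

theory Submission
  imports Defs
begin

text \<open>
  A partition in P^n of size n + 1 + e with embedding dimension n contains the n + 1 points
  of degree at most 1; its remaining e points form a set M of exponent vectors of degree at
  least 2 that is closed under going down as long as the degree stays at least 2. Every
  variable occurring in M occurs in one of the at most e elements of M of degree 2, so M
  involves u \<le> 2e variables, and the number c_u of such M involving a given set of u
  variables depends only on u. Hence y^n_(n+1+e) = \<Sum>_(u=1..2e) C(n,u) c_u, and since
  \<Sum>_j C(j+1,u) t^j = t^(u-1) / (1-t)^(u+1), the series (1-t)^(2e+1) Y_e equals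
  \<Sum>_u c_u t^(u-1) (1-t)^(2e-u), a polynomial of degree at most 2e - 1.
\<close>

text \<open>
  Exponent vectors are finitely supported functions \<open>nat \<Rightarrow> nat\<close> rather than lists, so
  that the variables can be renamed by an arbitrary permutation of \<open>nat\<close>.
\<close>

definition mon_degree :: "(nat \<Rightarrow> nat) \<Rightarrow> nat" where
  "mon_degree f = sum f {i. f i \<noteq> 0}"

definition high_ideal :: "nat \<Rightarrow> (nat \<Rightarrow> nat) set \<Rightarrow> bool" where
  "high_ideal e M \<longleftrightarrow> finite M \<and> card M = e
     \<and> (\<forall>f\<in>M. finite {i. f i \<noteq> 0} \<and> 2 \<le> mon_degree f)
     \<and> (\<forall>f\<in>M. \<forall>g. g \<le> f \<and> 2 \<le> mon_degree g \<longrightarrow> g \<in> M)"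

definition vars :: "(nat \<Rightarrow> nat) set \<Rightarrow> nat set" where
  "vars M = {i. \<exists>f\<in>M. f i \<noteq> 0}"

definition n_high_ideals :: "nat \<Rightarrow> nat set \<Rightarrow> nat" where
  "n_high_ideals e U = card {M. high_ideal e M \<and> vars M = U}"

lemma high_idealD:
  assumes "high_ideal e M"
  shows "finite M" "card M = e" "\<And>f. f \<in> M \<Longrightarrow> finite {i. f i \<noteq> 0}"
    "\<And>f. f \<in> M \<Longrightarrow> 2 \<le> mon_degree f"
    "\<And>f g. f \<in> M \<Longrightarrow> g \<le> f \<Longrightarrow> 2 \<le> mon_degree g \<Longrightarrow> g \<in> M"
  using assms unfolding high_ideal_def by blast+

lemma mon_degree_eq_sum:
  "finite A \<Longrightarrow> {i. f i \<noteq> 0} \<subseteq> A \<Longrightarrow> mon_degree f = sum f A"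
  unfolding mon_degree_def by (rule sum.mono_neutral_left) auto

lemma mon_degree_single: "mon_degree (\<lambda>j. if j = i then k else 0) = k"
  by (subst mon_degree_eq_sum[of "{i}"]) auto

lemma mon_degree_comp_bij:
  assumes "bij p" "finite {i. f i \<noteq> 0}"
  shows "mon_degree (f \<circ> p) = mon_degree f"
proof -
  have supp: "{i. (f \<circ> p) i \<noteq> 0} = p -` {i. f i \<noteq> 0}" by auto
  have "sum (f \<circ> p) (p -` {i. f i \<noteq> 0}) = sum f (p ` (p -` {i. f i \<noteq> 0}))"
    by (rule sum.reindex[symmetric]) (meson assms(1) bij_is_inj inj_on_subset subset_UNIV)
  also have "p ` (p -` {i. f i \<noteq> 0}) = {i. f i \<noteq> 0}"
    by (rule surj_image_vimage_eq[OF bij_is_surj[OF assms(1)]])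
  finally show ?thesis unfolding mon_degree_def supp .
qed

lemma nonzero_subset_le: "g \<le> (f :: nat \<Rightarrow> nat) \<Longrightarrow> {i. g i \<noteq> 0} \<subseteq> {i. f i \<noteq> 0}"
  by (auto simp: le_fun_def intro: less_le_trans)

lemma finite_nonzero_le:
  "g \<le> (f :: nat \<Rightarrow> nat) \<Longrightarrow> finite {i. f i \<noteq> 0} \<Longrightarrow> finite {i. g i \<noteq> 0}"
  using finite_subset nonzero_subset_le by blast

subsection \<open>Renaming variables\<close>

lemma finite_nonzero_comp_inj:
  "inj p \<Longrightarrow> finite {i. f i \<noteq> 0} \<Longrightarrow> finite {i. (f \<circ> p) i \<noteq> 0}"
  using finite_vimageI[of "{i. f i \<noteq> 0}" p] by (simp add: vimage_def)

lemma inj_comp_bij: "bij p \<Longrightarrow> inj (\<lambda>f. f \<circ> p)"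
  by (rule injI) (metis bij_is_surj comp_id surj_iff o_assoc)

lemma rename_inv_rename: "bij p \<Longrightarrow> (\<lambda>f. f \<circ> inv p) ` (\<lambda>f. f \<circ> p) ` M = M"
  using surj_iff[of p] by (simp add: image_image comp_assoc bij_is_surj)

lemma vars_rename: "vars ((\<lambda>f. f \<circ> p) ` M) = p -` vars M"
  by (auto simp: vars_def)

lemma high_ideal_rename:
  assumes p: "bij p" and M: "high_ideal e M"
  shows "high_ideal e ((\<lambda>f. f \<circ> p) ` M)"
  unfolding high_ideal_def
proof (intro conjI ballI allI impI)
  show "finite ((\<lambda>f. f \<circ> p) ` M)" using high_idealD(1)[OF M] by simp
  show "card ((\<lambda>f. f \<circ> p) ` M) = e"
    using high_idealD(2)[OF M] card_image inj_on_subset[OF inj_comp_bij[OF p]] by blast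
next
  fix h assume "h \<in> (\<lambda>f. f \<circ> p) ` M"
  then obtain f where f: "f \<in> M" "h = f \<circ> p" by auto
  show "finite {i. h i \<noteq> 0}"
    using f(2) finite_nonzero_comp_inj[OF bij_is_inj[OF p] high_idealD(3)[OF M f(1)]] by simp
  show "2 \<le> mon_degree h" using f high_idealD(3,4)[OF M] mon_degree_comp_bij[OF p] by simp
next
  fix h g assume "h \<in> (\<lambda>f. f \<circ> p) ` M" and g: "g \<le> h \<and> 2 \<le> mon_degree g"
  then obtain f where f: "f \<in> M" "h = f \<circ> p" by auto
  have fin_g: "finite {i. g i \<noteq> 0}"
    using g f finite_nonzero_le finite_nonzero_comp_inj[OF bij_is_inj[OF p]] high_idealD(3)[OF M]
    by blast
  have "g \<circ> inv p \<le> f"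
    using g f(2) p by (auto simp: le_fun_def bij_is_surj surj_f_inv_f dest: spec[of _ "inv p _"])
  moreover have "mon_degree (g \<circ> inv p) = mon_degree g"
    by (rule mon_degree_comp_bij[OF bij_imp_bij_inv[OF p] fin_g])
  ultimately have "g \<circ> inv p \<in> M" using high_idealD(5)[OF M f(1)] g by simp
  moreover have "g = g \<circ> inv p \<circ> p" using p by (simp add: comp_assoc bij_is_inj)
  ultimately show "g \<in> (\<lambda>f. f \<circ> p) ` M" by blast
qed

lemma n_high_ideals_rename:
  assumes p: "bij p"
  shows "n_high_ideals e (p -` U) = n_high_ideals e U"
proof -
  have p': "bij (inv p)" using p by (rule bij_imp_bij_inv)
  have inv_rename_rename: "(\<lambda>f. f \<circ> p) ` (\<lambda>f. f \<circ> inv p) ` M = M" for M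
    using rename_inv_rename[OF p'] p by (simp add: inv_inv_eq)
  have "bij_betw (\<lambda>M. (\<lambda>f. f \<circ> p) ` M)
          {M. high_ideal e M \<and> vars M = U} {M. high_ideal e M \<and> vars M = p -` U}"
  proof (rule bij_betw_byWitness[where f' = "\<lambda>M. (\<lambda>f. f \<circ> inv p) ` M"])
    show "(\<lambda>M. (\<lambda>f. f \<circ> p) ` M) ` {M. high_ideal e M \<and> vars M = U}
        \<subseteq> {M. high_ideal e M \<and> vars M = p -` U}"
      using high_ideal_rename[OF p] by (auto simp: vars_rename)
    have "inv p -` p -` U = U"
      using p by (auto simp: bij_is_surj surj_f_inv_f)
    then show "(\<lambda>M. (\<lambda>f. f \<circ> inv p) ` M) ` {M. high_ideal e M \<and> vars M = p -` U}
        \<subseteq> {M. high_ideal e M \<and> vars M = U}"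
      using high_ideal_rename[OF p'] by (auto simp: vars_rename)
  qed (simp_all add: rename_inv_rename[OF p] inv_rename_rename del: image_image)
  then show ?thesis
    unfolding n_high_ideals_def by (rule bij_betw_same_card[symmetric])
qed

lemma exists_bij_image_eq:
  assumes "finite A" "finite B" "card A = card B"
  obtains p :: "'a \<Rightarrow> 'a" where "bij p" "p ` A = B"
proof -
  define S where "S = A \<union> B"
  obtain g where g: "bij_betw g A B"
    using finite_same_card_bij assms by blast
  have "card (S - A) = card (S - B)"
    using assms by (simp add: S_def card_Diff_subset)
  then obtain k where k: "bij_betw k (S - A) (S - B)"
    using finite_same_card_bij assms by (metis S_def finite_Diff finite_UnI)
  define p where "p x = (if x \<in> A then g x else if x \<in> S then k x else x)" for x
  have "bij_betw p A B"
    using g by (rule bij_betw_cong[THEN iffD1, rotated]) (simp add: p_def)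
  moreover have "bij_betw p (S - A) (S - B)"
    using k by (rule bij_betw_cong[THEN iffD1, rotated]) (simp add: p_def)
  moreover have "bij_betw p (- S) (- S)"
    by (rule bij_betw_cong[THEN iffD1, rotated, of id]) (auto simp: p_def S_def)
  ultimately have "bij_betw p (A \<union> (S - A) \<union> - S) (B \<union> (S - B) \<union> - S)"
    by (intro bij_betw_combine) (auto simp: S_def)
  moreover have "A \<union> (S - A) \<union> - S = UNIV" "B \<union> (S - B) \<union> - S = UNIV"
    by (auto simp: S_def)
  ultimately have "bij p" by simp
  moreover have "p ` A = B" using \<open>bij_betw p A B\<close> by (simp add: bij_betw_def)
  ultimately show ?thesis by (rule that)
qed

lemma n_high_ideals_card:
  assumes "finite U"
  shows "n_high_ideals e U = n_high_ideals e {..<card U}"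
proof -
  obtain p :: "nat \<Rightarrow> nat" where p: "bij p" "p ` {..<card U} = U"
    using exists_bij_image_eq[of "{..<card U}" U] assms by auto
  then have "p -` U = {..<card U}"
    by (metis bij_is_inj inj_vimage_image_eq)
  then show ?thesis using n_high_ideals_rename[OF p(1), of e U] by simp
qed

subsection \<open>Size bounds\<close>

lemma high_ideal_entry_le:
  assumes M: "high_ideal e M" and f: "f \<in> M"
  shows "f i \<le> e + 1"
proof (rule ccontr)
  assume "\<not> f i \<le> e + 1"
  define single where "single k = (\<lambda>j. if j = i then k else 0 :: nat)" for k
  have "single ` {2..f i} \<subseteq> M"
    using high_idealD(5)[OF M f] by (auto simp: single_def le_fun_def mon_degree_single)
  moreover have "inj_on single {2..f i}"
    by (rule inj_onI) (metis single_def)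
  ultimately have "card {2..f i} \<le> e"
    using card_mono[OF high_idealD(1)[OF M]] high_idealD(2)[OF M] card_image by metis
  then show False using \<open>\<not> f i \<le> e + 1\<close> by simp
qed

lemma finite_high_ideals_vars_subset:
  assumes "finite U"
  shows "finite {M. high_ideal e M \<and> vars M \<subseteq> U}"
proof -
  let ?W = "{f. \<forall>x. (x \<in> U \<longrightarrow> f x \<in> {..e+1}) \<and> (x \<notin> U \<longrightarrow> f x = 0)}"
  have "finite ?W" using finite_set_of_finite_funs[OF assms, of "{..e+1}" 0] by simp
  moreover have "{M. high_ideal e M \<and> vars M \<subseteq> U} \<subseteq> Pow ?W"
    using high_ideal_entry_le by (fastforce simp: vars_def)
  ultimately show ?thesis by (meson finite_Pow_iff finite_subset)
qed

lemma vars_nonempty: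
  assumes M: "high_ideal e M" and "e > 0"
  shows "vars M \<noteq> {}"
proof -
  obtain f where f: "f \<in> M" using high_idealD(2)[OF M] \<open>e > 0\<close> by fastforce
  have "mon_degree f \<noteq> 0" using high_idealD(4)[OF M f] by simp
  then obtain i where "f i \<noteq> 0" unfolding mon_degree_def by fastforce
  then show ?thesis using f by (auto simp: vars_def)
qed

lemma vars_subset_Union_degree_2:
  assumes M: "high_ideal e M"
  shows "vars M \<subseteq> (\<Union>g\<in>{g\<in>M. mon_degree g = 2}. {i. g i \<noteq> 0})"
proof
  fix i assume "i \<in> vars M"
  then obtain f where f: "f \<in> M" "f i \<noteq> 0" unfolding vars_def by auto
  have f2: "2 \<le> mon_degree f" using high_idealD(4)[OF M f(1)] .
  obtain g where g: "g \<le> f" "mon_degree g = 2" "g i \<noteq> 0"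
  proof (cases "2 \<le> f i")
    case True
    show thesis
      by (rule that[of "\<lambda>j. if j = i then 2 else 0"]) (use True in \<open>auto simp: le_fun_def mon_degree_single\<close>)
  next
    case False
    then have "f i = 1" using f(2) by simp
    have "\<exists>j. j \<noteq> i \<and> f j \<noteq> 0"
    proof (rule ccontr)
      assume "\<nexists>j. j \<noteq> i \<and> f j \<noteq> 0"
      then have "mon_degree f = f i" by (subst mon_degree_eq_sum[of "{i}"]) auto
      with f2 \<open>f i = 1\<close> show False by simp
    qed
    then obtain j where j: "j \<noteq> i" "f j \<noteq> 0" by blast
    show thesis
    proof (rule that[of "\<lambda>k. if k = i \<or> k = j then 1 else 0"])
      show "mon_degree (\<lambda>k. if k = i \<or> k = j then 1 else 0) = 2"
        using j by (subst mon_degree_eq_sum[of "{i, j}"]) auto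
    qed (use \<open>f i = 1\<close> j in \<open>auto simp: le_fun_def\<close>)
  qed
  moreover have "g \<in> M" using high_idealD(5)[OF M f(1) g(1)] g(2) by simp
  ultimately show "i \<in> (\<Union>g\<in>{g\<in>M. mon_degree g = 2}. {i. g i \<noteq> 0})" by blast
qed

lemma card_vars_le:
  assumes M: "high_ideal e M"
  shows "card (vars M) \<le> 2 * e"
proof -
  let ?M2 = "{g\<in>M. mon_degree g = 2}"
  have fin: "finite ?M2" using high_idealD(1)[OF M] by simp
  have card_supp: "card {i. g i \<noteq> 0} \<le> 2" if "g \<in> ?M2" for g
  proof -
    have "card {i. g i \<noteq> 0} = (\<Sum>i | g i \<noteq> 0. 1)" by simp
    also have "\<dots> \<le> sum g {i. g i \<noteq> 0}" by (rule sum_mono) simp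
    also have "\<dots> = 2" using that unfolding mon_degree_def by simp
    finally show ?thesis .
  qed
  have "card (vars M) \<le> card (\<Union>g\<in>?M2. {i. g i \<noteq> 0})"
    by (rule card_mono[OF _ vars_subset_Union_degree_2[OF M]]) (use fin high_idealD(3)[OF M] in auto)
  also have "\<dots> \<le> (\<Sum>g\<in>?M2. card {i. g i \<noteq> 0})" by (rule card_UN_le[OF fin])
  also have "\<dots> \<le> (\<Sum>g\<in>?M2. 2)" by (rule sum_mono) (rule card_supp)
  also have "\<dots> = 2 * card ?M2" by simp
  also have "\<dots> \<le> 2 * e"
    using card_mono[OF high_idealD(1)[OF M], of ?M2] high_idealD(2)[OF M] by auto
  finally show ?thesis .
qed

subsection \<open>Counting by the set of variables\<close>

lemma sum_Pow_card:
  assumes "finite A"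
  shows "(\<Sum>U\<in>Pow A. g (card U)) = (\<Sum>u\<le>card A. of_nat (card A choose u) * g u)"
proof -
  have "(\<Sum>U\<in>Pow A. g (card U)) = (\<Sum>u\<le>card A. \<Sum>U\<in>{U\<in>Pow A. card U = u}. g (card U))"
    by (rule sum.group[symmetric]) (use assms card_mono in auto)
  also have "\<dots> = (\<Sum>u\<le>card A. of_nat (card A choose u) * g u)"
  proof (rule sum.cong[OF refl])
    fix u
    have "card {U\<in>Pow A. card U = u} = card A choose u"
      using n_subsets[OF assms, of u] by (simp add: Pow_def)
    then show "(\<Sum>U\<in>{U\<in>Pow A. card U = u}. g (card U)) = of_nat (card A choose u) * g u"
      by simp
  qed
  finally show ?thesis .
qed

lemma card_high_ideals_vars_subset_eq_sum:
  assumes "finite A"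
  shows "card {M. high_ideal e M \<and> vars M \<subseteq> A} = (\<Sum>U\<in>Pow A. n_high_ideals e U)"
proof -
  have eq: "{M. high_ideal e M \<and> vars M \<subseteq> A} = (\<Union>U\<in>Pow A. {M. high_ideal e M \<and> vars M = U})"
    by auto
  have fin: "finite {M. high_ideal e M \<and> vars M = U}" if "U \<in> Pow A" for U
    by (rule finite_subset[OF _ finite_high_ideals_vars_subset[OF assms, of e]]) (use that in auto)
  show ?thesis
    unfolding eq n_high_ideals_def by (rule card_UN_disjoint) (use assms fin in auto)
qed

lemma n_high_ideals_eq_0:
  assumes "e > 0" "u \<notin> {1..2*e}"
  shows "n_high_ideals e {..<u} = 0"
proof -
  have "{M. high_ideal e M \<and> vars M = {..<u}} = {}"
    using vars_nonempty[OF _ \<open>e > 0\<close>] card_vars_le[of e] assms(2) by (fastforce simp: not_le)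
  then show ?thesis unfolding n_high_ideals_def by (metis card.empty)
qed

lemma card_high_ideals_vars_lessThan:
  assumes "e > 0"
  shows "card {M. high_ideal e M \<and> vars M \<subseteq> {..<n}}
           = (\<Sum>u\<in>{1..2*e}. (n choose u) * n_high_ideals e {..<u})"
proof -
  have "card {M. high_ideal e M \<and> vars M \<subseteq> {..<n}} = (\<Sum>U\<in>Pow {..<n}. n_high_ideals e {..<card U})"
    unfolding card_high_ideals_vars_subset_eq_sum[OF finite_lessThan]
    by (rule sum.cong) (auto intro: n_high_ideals_card finite_subset)
  also have "\<dots> = (\<Sum>u\<le>n. (n choose u) * n_high_ideals e {..<u})"
    using sum_Pow_card[of "{..<n}" "\<lambda>u. n_high_ideals e {..<u}"] by simp
  also have "\<dots> = (\<Sum>u\<le>n + 2*e. (n choose u) * n_high_ideals e {..<u})"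
    by (rule sum.mono_neutral_left) auto
  also have "\<dots> = (\<Sum>u\<in>{1..2*e}. (n choose u) * n_high_ideals e {..<u})"
    by (rule sum.mono_neutral_right) (use n_high_ideals_eq_0[OF assms] in auto)
  finally show ?thesis .
qed

subsection \<open>Partitions of full embedding dimension\<close>

definition fun_of_list :: "nat list \<Rightarrow> nat \<Rightarrow> nat" where
  "fun_of_list a i = (if i < length a then a ! i else 0)"

lemma fun_of_list_inj: "length a = length b \<Longrightarrow> fun_of_list a = fun_of_list b \<Longrightarrow> a = b"
  by (rule nth_equalityI) (auto simp: fun_of_list_def fun_eq_iff dest: spec[where x = "_ :: nat"] split: if_splits)

lemma nonzero_fun_of_list_subset: "{i. fun_of_list a i \<noteq> 0} \<subseteq> {..<length a}"
  by (auto simp: fun_of_list_def split: if_splits)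

lemma mon_degree_fun_of_list: "mon_degree (fun_of_list a) = sum_list a"
proof -
  have "mon_degree (fun_of_list a) = sum (fun_of_list a) {..<length a}"
    by (rule mon_degree_eq_sum[OF _ nonzero_fun_of_list_subset]) simp
  also have "\<dots> = sum_list a"
    by (simp add: sum_list_sum_nth atLeast0LessThan fun_of_list_def)
  finally show ?thesis .
qed

lemma list_all2_le_iff_fun_of_list_le:
  "length y = length a \<Longrightarrow> list_all2 (\<le>) y a \<longleftrightarrow> fun_of_list y \<le> fun_of_list a"
  by (auto simp: list_all2_conv_all_nth le_fun_def fun_of_list_def)

lemma fun_of_list_map_upt: "{i. f i \<noteq> 0} \<subseteq> {..<n} \<Longrightarrow> fun_of_list (map f [0..<n]) = f"
  by (auto simp: fun_of_list_def fun_eq_iff)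

lemma sum_list_mono_list_all2: "list_all2 (\<le>) y a \<Longrightarrow> sum_list y \<le> sum_list (a :: nat list)"
  by (induction rule: list_all2_induct) auto

definition unit_points :: "nat \<Rightarrow> nat list set" where
  "unit_points n = {a. length a = n \<and> sum_list a = 1}"

definition low_points :: "nat \<Rightarrow> nat list set" where
  "low_points n = {a. length a = n \<and> sum_list a \<le> 1}"

lemma sum_list_eq_0_set: "{a. length a = n \<and> sum_list a = (0::nat)} = {replicate n 0}"
  by (auto simp: replicate_length_same)

lemma unit_points_Suc: "unit_points (Suc n) = insert (1 # replicate n 0) ((#) 0 ` unit_points n)"
proof (rule set_eqI)
  fix a
  show "a \<in> unit_points (Suc n) \<longleftrightarrow> a \<in> insert (1 # replicate n 0) ((#) 0 ` unit_points n)"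
  proof (cases a)
    case (Cons x b)
    have "x + sum_list b = 1 \<longleftrightarrow> (x = 1 \<and> sum_list b = 0) \<or> (x = 0 \<and> sum_list b = 1)" by arith
    then show ?thesis
      using sum_list_eq_0_set[of n] by (auto simp: Cons unit_points_def)
  qed (auto simp: unit_points_def)
qed

lemma card_unit_points: "finite (unit_points n) \<and> card (unit_points n) = n"
proof (induction n)
  case 0
  then show ?case by (simp add: unit_points_def)
next
  case (Suc n)
  have "1 # replicate n 0 \<notin> (#) 0 ` unit_points n" by auto
  then show ?case using Suc by (simp add: unit_points_Suc card_image)
qed

lemma low_points_eq: "low_points n = insert (replicate n 0) (unit_points n)"
proof -
  have "low_points n = {a. length a = n \<and> sum_list a = 0} \<union> unit_points n"
    unfolding low_points_def unit_points_def by (auto simp del: sum_list_eq_0_iff)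
  then show ?thesis using sum_list_eq_0_set[of n] by simp
qed

lemma card_low_points: "finite (low_points n) \<and> card (low_points n) = n + 1"
  using card_unit_points[of n] by (simp add: low_points_eq unit_points_def sum_list_replicate)

lemma partitionsD:
  assumes "L \<in> partitions n d"
  shows "L \<subseteq> {a. length a = n}" "card L = d" "finite L"
    "\<And>a y. a \<in> L \<Longrightarrow> length y = n \<Longrightarrow> list_all2 (\<le>) y a \<Longrightarrow> y \<in> L"
  using assms unfolding partitions_def by blast+

lemma low_points_subset:
  assumes L: "L \<in> partitions n d" and "d > 0" and emb: "emb_dim L = n"
  shows "low_points n \<subseteq> L"
proof -
  note P = partitionsD[OF L]
  have "{a\<in>L. sum_list a = 1} \<subseteq> unit_points n" using P(1) by (auto simp: unit_points_def)
  moreover have "card {a\<in>L. sum_list a = 1} = card (unit_points n)"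
    using emb card_unit_points[of n] by (simp add: emb_dim_def)
  ultimately have "unit_points n \<subseteq> L"
    using card_subset_eq[of "unit_points n"] card_unit_points[of n] by blast
  moreover obtain b where b: "b \<in> L" using P(2) \<open>d > 0\<close> by fastforce
  then have "replicate n 0 \<in> L"
    using P(1,4) by (auto simp: list_all2_conv_all_nth)
  ultimately show ?thesis by (simp add: low_points_eq)
qed

definition high_part :: "nat list set \<Rightarrow> (nat \<Rightarrow> nat) set" where
  "high_part L = fun_of_list ` {a\<in>L. 2 \<le> sum_list a}"

definition partition_of :: "nat \<Rightarrow> (nat \<Rightarrow> nat) set \<Rightarrow> nat list set" where
  "partition_of n M = {a. length a = n \<and> (sum_list a \<le> 1 \<or> fun_of_list a \<in> M)}"

lemma low_points_Un_high_points:
  assumes "low_points n \<subseteq> L" "L \<subseteq> {a. length a = n}"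
  shows "L = low_points n \<union> {a\<in>L. 2 \<le> sum_list a}" "low_points n \<inter> {a\<in>L. 2 \<le> sum_list a} = {}"
  using assms by (auto simp: low_points_def)

lemma card_high_points:
  assumes L: "L \<in> partitions n (n + 1 + e)" and emb: "emb_dim L = n"
  shows "card {a\<in>L. 2 \<le> sum_list a} = e"
proof -
  note P = partitionsD[OF L]
  note split = low_points_Un_high_points[OF low_points_subset[OF L _ emb] P(1), simplified]
  have "card L = card (low_points n \<union> {a\<in>L. 2 \<le> sum_list a})"
    using arg_cong[OF split(1), of card] .
  also have "\<dots> = card (low_points n) + card {a\<in>L. 2 \<le> sum_list a}"
    by (rule card_Un_disjoint) (use card_low_points P(3) split(2) in auto)
  finally have "card L = card (low_points n) + card {a\<in>L. 2 \<le> sum_list a}" .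
  then show ?thesis using P(2) card_low_points[of n] by simp
qed

lemma high_ideal_high_part:
  assumes L: "L \<in> partitions n (n + 1 + e)" and emb: "emb_dim L = n"
  shows "high_ideal e (high_part L)"
  unfolding high_ideal_def high_part_def
proof (intro conjI ballI allI impI)
  note P = partitionsD[OF L]
  let ?H = "{a\<in>L. 2 \<le> sum_list a}"
  show "finite (fun_of_list ` ?H)" using P(3) by simp
  have "inj_on fun_of_list ?H" using P(1) by (auto intro!: inj_onI fun_of_list_inj)
  then show "card (fun_of_list ` ?H) = e" using card_high_points[OF L emb] by (simp add: card_image)
next
  fix f assume "f \<in> fun_of_list ` {a\<in>L. 2 \<le> sum_list a}"
  then obtain a where "a \<in> L" "2 \<le> sum_list a" "f = fun_of_list a" by auto
  then show "finite {i. f i \<noteq> 0}" "2 \<le> mon_degree f"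
    using nonzero_fun_of_list_subset[of a] finite_subset mon_degree_fun_of_list by auto
next
  note P = partitionsD[OF L]
  fix f g assume "f \<in> fun_of_list ` {a\<in>L. 2 \<le> sum_list a}" and g: "g \<le> f \<and> 2 \<le> mon_degree g"
  then obtain a where a: "a \<in> L" "f = fun_of_list a" by auto
  have len: "length a = n" using a(1) P(1) by auto
  have "{i. g i \<noteq> 0} \<subseteq> {..<n}"
    using nonzero_subset_le[of g f] g a(2) len nonzero_fun_of_list_subset[of a] by blast
  then have y: "fun_of_list (map g [0..<n]) = g" by (rule fun_of_list_map_upt)
  then have "list_all2 (\<le>) (map g [0..<n]) a"
    using list_all2_le_iff_fun_of_list_le[of "map g [0..<n]" a] len g a(2) by simp
  then have "map g [0..<n] \<in> L" using P(4)[OF a(1)] by simp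
  moreover have "2 \<le> sum_list (map g [0..<n])" using g y mon_degree_fun_of_list by metis
  ultimately show "g \<in> fun_of_list ` {a\<in>L. 2 \<le> sum_list a}" using y by force
qed

lemma vars_high_part_subset:
  assumes "L \<subseteq> {a. length a = n}"
  shows "vars (high_part L) \<subseteq> {..<n}"
proof
  fix i assume "i \<in> vars (high_part L)"
  then obtain a where "a \<in> L" "fun_of_list a i \<noteq> 0" by (auto simp: vars_def high_part_def)
  then show "i \<in> {..<n}" using assms nonzero_fun_of_list_subset[of a] by auto
qed

lemma partition_of_high_part:
  assumes L: "L \<in> partitions n (n + 1 + e)" and emb: "emb_dim L = n"
  shows "partition_of n (high_part L) = L"
proof (rule set_eqI, rule iffI)
  note P = partitionsD[OF L]
  fix a assume "a \<in> partition_of n (high_part L)"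
  then have len: "length a = n" and "sum_list a \<le> 1 \<or> fun_of_list a \<in> high_part L"
    by (simp_all add: partition_of_def)
  from this(2) show "a \<in> L"
  proof
    assume "sum_list a \<le> 1"
    then have "a \<in> low_points n" using len by (simp add: low_points_def)
    then show "a \<in> L" using low_points_subset[OF L _ emb] by auto
  next
    assume "fun_of_list a \<in> high_part L"
    then obtain b where "b \<in> L" "fun_of_list a = fun_of_list b" by (auto simp: high_part_def)
    moreover have "length b = n" using P(1) \<open>b \<in> L\<close> by auto
    ultimately show "a \<in> L" using fun_of_list_inj[of a b] len by simp
  qed
next
  fix a assume "a \<in> L"
  then have "sum_list a \<le> 1 \<or> fun_of_list a \<in> high_part L"
    by (auto simp: high_part_def)
  then show "a \<in> partition_of n (high_part L)"
    using partitionsD(1)[OF L] \<open>a \<in> L\<close> by (auto simp: partition_of_def)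
qed

lemma emb_dim_partition_of: "emb_dim (partition_of n M) = n"
proof -
  have "{a\<in>partition_of n M. sum_list a = 1} = unit_points n"
    by (auto simp: partition_of_def unit_points_def)
  then show ?thesis using card_unit_points[of n] by (simp add: emb_dim_def)
qed

lemma image_fun_of_list_length_eq:
  assumes "vars M \<subseteq> {..<n}"
  shows "fun_of_list ` {a. length a = n \<and> fun_of_list a \<in> M} = M"
proof -
  have "f \<in> fun_of_list ` {a. length a = n \<and> fun_of_list a \<in> M}" if "f \<in> M" for f
  proof -
    have "fun_of_list (map f [0..<n]) = f"
      using assms that by (intro fun_of_list_map_upt) (auto simp: vars_def)
    then show ?thesis using that by (intro rev_image_eqI[of "map f [0..<n]"]) auto
  qed
  then show ?thesis by auto
qed

lemma high_part_partition_of: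
  assumes M: "high_ideal e M" and vars: "vars M \<subseteq> {..<n}"
  shows "high_part (partition_of n M) = M"
proof -
  have "{a\<in>partition_of n M. 2 \<le> sum_list a} = {a. length a = n \<and> fun_of_list a \<in> M}"
    using high_idealD(4)[OF M] by (auto simp: partition_of_def simp flip: mon_degree_fun_of_list)
  then show ?thesis by (simp add: high_part_def image_fun_of_list_length_eq[OF vars])
qed

lemma partition_of_mem_partitions:
  assumes M: "high_ideal e M" and vars: "vars M \<subseteq> {..<n}"
  shows "partition_of n M \<in> partitions n (n + 1 + e)"
proof -
  let ?H = "{a. length a = n \<and> fun_of_list a \<in> M}"
  have inj: "inj_on fun_of_list ?H" by (auto intro!: inj_onI fun_of_list_inj)
  have fin: "finite ?H" and card: "card ?H = e"
    using finite_imageD[OF _ inj] card_image[OF inj] high_idealD(1,2)[OF M]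
      image_fun_of_list_length_eq[OF vars] by auto
  have "low_points n \<inter> ?H = {}"
    using high_idealD(4)[OF M] by (fastforce simp: low_points_def simp flip: mon_degree_fun_of_list)
  moreover have "partition_of n M = low_points n \<union> ?H"
    by (auto simp: partition_of_def low_points_def)
  ultimately have "finite (partition_of n M)" "card (partition_of n M) = n + 1 + e"
    using card_low_points[of n] fin card by (simp_all add: card_Un_disjoint)
  moreover have "y \<in> partition_of n M"
    if a: "a \<in> partition_of n M" and y: "length y = n" "list_all2 (\<le>) y a" for a y
  proof (cases "sum_list y \<le> 1")
    case False
    then have "\<not> sum_list a \<le> 1" using sum_list_mono_list_all2[OF y(2)] by simp
    then have "fun_of_list a \<in> M" "length a = n" using a by (auto simp: partition_of_def)
    moreover have "fun_of_list y \<le> fun_of_list a"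
      using list_all2_le_iff_fun_of_list_le y \<open>length a = n\<close> by simp
    moreover have "2 \<le> mon_degree (fun_of_list y)"
      using False by (simp add: mon_degree_fun_of_list)
    ultimately have "fun_of_list y \<in> M" using high_idealD(5)[OF M] by blast
    then show ?thesis using y by (simp add: partition_of_def)
  qed (use y in \<open>simp add: partition_of_def\<close>)
  ultimately show ?thesis unfolding partitions_def by (auto simp: partition_of_def)
qed

lemma ycount_eq_card_high_ideals:
  "ycount n (n + 1 + e) = card {M. high_ideal e M \<and> vars M \<subseteq> {..<n}}"
proof -
  have "bij_betw high_part {L\<in>partitions n (n + 1 + e). emb_dim L = n}
          {M. high_ideal e M \<and> vars M \<subseteq> {..<n}}"
  proof (rule bij_betw_byWitness[where f' = "partition_of n"])
    show "high_part ` {L\<in>partitions n (n + 1 + e). emb_dim L = n}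
        \<subseteq> {M. high_ideal e M \<and> vars M \<subseteq> {..<n}}"
      using high_ideal_high_part vars_high_part_subset[OF partitionsD(1)] by blast
    show "partition_of n ` {M. high_ideal e M \<and> vars M \<subseteq> {..<n}}
        \<subseteq> {L\<in>partitions n (n + 1 + e). emb_dim L = n}"
      using partition_of_mem_partitions emb_dim_partition_of by blast
    show "\<forall>L\<in>{L\<in>partitions n (n + 1 + e). emb_dim L = n}. partition_of n (high_part L) = L"
      using partition_of_high_part by blast
    show "\<forall>M\<in>{M. high_ideal e M \<and> vars M \<subseteq> {..<n}}. high_part (partition_of n M) = M"
      using high_part_partition_of by blast
  qed
  then show ?thesis unfolding ycount_def by (rule bij_betw_same_card)
qed

subsection \<open>The generating series\<close>

lemma one_minus_X_power_nth:
  "((1 - fps_X) ^ m :: 'a::comm_ring_1 fps) $ k = (-1) ^ k * of_nat (m choose k)"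
proof (induction m arbitrary: k)
  case 0
  then show ?case by (cases k) simp_all
next
  case (Suc m)
  have "((1 - fps_X) ^ Suc m :: 'a fps) $ k = ((1 - fps_X) ^ m) $ k - (fps_X * (1 - fps_X) ^ m) $ k"
    by (simp add: algebra_simps)
  also have "\<dots> = (-1) ^ k * of_nat (Suc m choose k)"
    using Suc by (cases k) (simp_all add: algebra_simps)
  finally show ?case .
qed

lemma fps_X_power_mult_one_minus_X_power_nth_eq_0:
  "a + b < h \<Longrightarrow> (fps_X ^ a * (1 - fps_X) ^ b :: 'a::comm_ring_1 fps) $ h = 0"
  by (simp add: fps_X_power_mult_nth one_minus_X_power_nth binomial_eq_0)

lemma choose_series_mult_one_minus_X:
  "Abs_fps (\<lambda>j. of_nat ((j + Suc u) choose Suc u)) * (1 - fps_X)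
     = (Abs_fps (\<lambda>j. of_nat ((j + u) choose u)) :: 'a::comm_ring_1 fps)"
proof (rule fps_ext)
  fix j
  let ?f = "Abs_fps (\<lambda>j. of_nat ((j + Suc u) choose Suc u)) :: 'a fps"
  have "(?f * (1 - fps_X)) $ j = ?f $ j - (fps_X * ?f) $ j" by (simp add: algebra_simps)
  also have "\<dots> = of_nat ((j + u) choose u)"
    by (cases j) (simp_all add: binomial_eq_0)
  finally show "(?f * (1 - fps_X)) $ j = Abs_fps (\<lambda>j. of_nat ((j + u) choose u)) $ j" by simp
qed

lemma choose_series_mult_one_minus_X_power:
  "Abs_fps (\<lambda>j. of_nat ((j + u) choose u)) * (1 - fps_X) ^ Suc u = (1 :: 'a::comm_ring_1 fps)"
proof (induction u)
  case 0
  show ?case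
  proof (rule fps_ext)
    fix j
    have "(Abs_fps (\<lambda>j. 1) * (1 - fps_X) :: 'a fps) $ j
        = Abs_fps (\<lambda>j. 1) $ j - (fps_X * Abs_fps (\<lambda>j. 1) :: 'a fps) $ j"
      by (simp add: algebra_simps)
    then show "(Abs_fps (\<lambda>j. of_nat ((j + 0) choose 0)) * (1 - fps_X) ^ Suc 0 :: 'a fps) $ j
        = (1 :: 'a fps) $ j"
      by (cases j) auto
  qed
next
  case (Suc u)
  have "Abs_fps (\<lambda>j. of_nat ((j + Suc u) choose Suc u)) * (1 - fps_X) ^ Suc (Suc u)
      = (Abs_fps (\<lambda>j. of_nat ((j + Suc u) choose Suc u)) * (1 - fps_X)) * (1 - fps_X :: 'a fps) ^ Suc u"
    by (simp only: power_Suc mult.assoc)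
  also have "\<dots> = 1" by (simp only: choose_series_mult_one_minus_X Suc.IH)
  finally show ?case .
qed

lemma choose_succ_series_mult_one_minus_X_power:
  assumes "1 \<le> u"
  shows "Abs_fps (\<lambda>j. of_nat ((j + 1) choose u)) * (1 - fps_X) ^ Suc u = (fps_X ^ (u - 1) :: 'a::comm_ring_1 fps)"
proof -
  have "Abs_fps (\<lambda>j. of_nat ((j + 1) choose u))
      = fps_X ^ (u - 1) * (Abs_fps (\<lambda>j. of_nat ((j + u) choose u)) :: 'a fps)"
    using assms by (intro fps_ext) (auto simp: fps_X_power_mult_nth binomial_eq_0)
  then show ?thesis
    by (simp only: mult.assoc choose_series_mult_one_minus_X_power mult_1_right)
qed

lemma Yser_eq_sum:
  assumes "e > 0"
  shows "Yser e = (\<Sum>u\<in>{1..2*e}.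
           fps_const (int (n_high_ideals e {..<u})) * Abs_fps (\<lambda>j. of_nat ((j + 1) choose u)))"
proof (rule fps_ext)
  fix j
  have "ycount (j + 1) (j + 2 + e) = (\<Sum>u\<in>{1..2*e}. ((j + 1) choose u) * n_high_ideals e {..<u})"
    using ycount_eq_card_high_ideals[of "j + 1" e] card_high_ideals_vars_lessThan[OF assms]
    by (simp add: add.commute add.left_commute)
  then show "Yser e $ j = (\<Sum>u\<in>{1..2*e}.
      fps_const (int (n_high_ideals e {..<u})) * Abs_fps (\<lambda>j. of_nat ((j + 1) choose u))) $ j"
    by (simp add: Yser_def fps_sum_nth mult.commute)
qed

lemma Yser_mult_one_minus_X_power_nth_eq_0:
  assumes "e > 0" "2 * e \<le> h"
  shows "(Yser e * (1 - fps_X) ^ (2*e+1)) $ h = 0"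
proof -
  have "Abs_fps (\<lambda>j. of_nat ((j + 1) choose u)) * (1 - fps_X) ^ (2*e+1)
      = (fps_X ^ (u - 1) * (1 - fps_X) ^ (2*e - u) :: int fps)" if "u \<in> {1..2*e}" for u
  proof -
    have "2*e + 1 = Suc u + (2*e - u)" using that by simp
    then have "Abs_fps (\<lambda>j. of_nat ((j + 1) choose u)) * (1 - fps_X) ^ (2*e+1)
        = (Abs_fps (\<lambda>j. of_nat ((j + 1) choose u)) * (1 - fps_X) ^ Suc u) * (1 - fps_X :: int fps) ^ (2*e - u)"
      by (simp only: power_add mult.assoc)
    also have "\<dots> = fps_X ^ (u - 1) * (1 - fps_X) ^ (2*e - u)"
      using that by (subst choose_succ_series_mult_one_minus_X_power) auto
    finally show ?thesis .
  qed
  then have "Yser e * (1 - fps_X) ^ (2*e+1) = (\<Sum>u\<in>{1..2*e}.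
      fps_const (int (n_high_ideals e {..<u})) * (fps_X ^ (u - 1) * (1 - fps_X) ^ (2*e - u)))"
    by (simp add: Yser_eq_sum[OF assms(1)] sum_distrib_right mult.assoc)
  moreover have "(fps_X ^ (u - 1) * (1 - fps_X) ^ (2*e - u) :: int fps) $ h = 0" if "u \<in> {1..2*e}" for u
    using that assms(2) by (intro fps_X_power_mult_one_minus_X_power_nth_eq_0) auto
  ultimately show ?thesis by (simp add: fps_sum_nth)
qed

lemma neg_one_power_add_eq_diff:
  assumes "j \<le> h"
  shows "(-1 :: 'a::ring_1) ^ (h + j) = (-1) ^ (h - j)"
proof -
  have "h + j = (h - j) + 2 * j" using assms by simp
  then have "(-1 :: 'a) ^ (h + j) = (-1) ^ (h - j) * ((-1) ^ 2) ^ j"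
    by (simp only: power_add power_mult)
  then show ?thesis by simp
qed

lemma Yser_mult_one_minus_X_power_nth:
  "(Yser e * (1 - fps_X) ^ (2*e+1)) $ h = gamma e h"
  unfolding fps_mult_nth one_minus_X_power_nth gamma_def
proof (rule sum.cong[OF refl])
  fix j assume "j \<in> {0..h}"
  then have "(-1 :: int) ^ (h + j) = (-1) ^ (h - j)" by (simp add: neg_one_power_add_eq_diff)
  moreover have "j + 2 + e = j + e + 2" by simp
  ultimately show "Yser e $ j * ((-1) ^ (h - j) * of_nat ((2*e+1) choose (h - j)))
      = (-1) ^ (h + j) * int ((2*e+1) choose (h - j)) * int (ycount (j + 1) (j + e + 2))"
    by (simp add: Yser_def)
qed

lemma coeff_ypoly: "coeff (ypoly e) h = (if h \<le> 2*e - 1 then gamma e h else 0)"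
  unfolding ypoly_def by (simp add: coeff_sum coeff_monom)

lemma degree_ypoly_le: "degree (ypoly e) \<le> 2*e - 1"
  unfolding ypoly_def by (rule degree_sum_le) (auto intro: order.trans[OF degree_monom_le])

lemma Yser_mult_one_minus_X_power:
  assumes "e > 0"
  shows "Yser e * (1 - fps_X) ^ (2*e+1) = fps_of_poly (ypoly e)"
  by (rule fps_ext) (use Yser_mult_one_minus_X_power_nth_eq_0[OF assms] in
      \<open>auto simp: Yser_mult_one_minus_X_power_nth coeff_ypoly simp del: One_nat_def\<close>)

lemma of_int_fps_eq_divide:
  fixes F :: "int fps"
  assumes "F * (1 - fps_X) ^ m = fps_of_poly p"
  shows "(Abs_fps (\<lambda>k. of_int (F $ k)) :: 'a::field fps)
           = fps_of_poly (map_poly of_int p) / (1 - fps_X) ^ m"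
proof -
  have "Abs_fps (\<lambda>k. of_int (F $ k)) * (1 - fps_X) ^ m = (fps_of_poly (map_poly of_int p) :: 'a fps)"
  proof (rule fps_ext)
    fix h
    have "(Abs_fps (\<lambda>k. of_int (F $ k)) * (1 - fps_X) ^ m :: 'a fps) $ h
        = of_int ((F * (1 - fps_X) ^ m) $ h)"
      unfolding fps_mult_nth one_minus_X_power_nth by (simp add: of_int_sum)
    then show "(Abs_fps (\<lambda>k. of_int (F $ k)) * (1 - fps_X) ^ m :: 'a fps) $ h
        = fps_of_poly (map_poly of_int p) $ h"
      by (simp add: assms coeff_map_poly)
  qed
  moreover have "((1 - fps_X) ^ m :: 'a fps) \<noteq> 0"
    using one_minus_X_power_nth[of m 0] by (metis fps_zero_nth one_neq_zero mult_1 power_0 of_nat_1 binomial_n_0)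
  ultimately show ?thesis by (metis nonzero_mult_div_cancel_right)
qed

theorem theorem3p4:
  fixes e :: nat
  assumes "e > 0"
  shows "Yser e * (1 - fps_X) ^ (2*e+1) = fps_of_poly (ypoly e)
         \<and> (Abs_fps (\<lambda>k. rat_of_int (fps_nth (Yser e) k)) :: rat fps)
             = fps_of_poly (map_poly rat_of_int (ypoly e)) / (1 - fps_X) ^ (2*e+1)
         \<and> degree (ypoly e) \<le> 2*e - 1"
  using Yser_mult_one_minus_X_power[OF assms] of_int_fps_eq_divide degree_ypoly_le by blast

end
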